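(* In the transactional panorama model with the lenses and metrics described in the context, for any $k\ge 0$: $S(k\text{-LCMB}) \le S(k\text{-LCNB}) \le S(k\text{-GCNB})$ and $I(k\text{-LCMB}) \ge I(k\text{-LCNB}) \ge I(k\text{-GCNB})$.
   Context: A view graph is a DAG on a set $N$ of nodes (source data and views). Write transactions are processed one at a time; write transaction $w^{t_i}$ creates version $G^{t_i}$ with state set $V^{t_i}$ containing, for each node $n_k$, either its computed new result $v_k^{t_i}$, a placeholder $UC_k^{t_i}$ if $w^{t_i}$ updates $n_k$ but has not yet computed it, or its result from the previous version if $n_k$ is not updated. A version is committed once all its new results are computed; at any time there is the committed graph (most recently committed version, no UCs) and the latest graph (version of the most recent write transaction). Read transactions $r^{s_1},\dots,r^{s_m}$ each read the views in the current viewport and return immediately a set $H^{s_i}$ of states (results or UCs); $Time(r^{s_i})$ is its return time. A returned state's timestamp is that of its version. Lenses: $k$-GCNB reads the latest graph if it has at most $k$ UCs in total, otherwise the committed graph. $k$-LCNB reads the more recent of the committed and latest graphs having at most $k$ UCs for the viewport. $k$-LCMB: if reading either the committed or the latest graph preserves monotonicity (no view gets a state with smaller timestamp than previously read), behave like $k$-LCNB; otherwise read the latest graph. Metrics for $R=\{r^{s_1},\dots,r^{s_m}\}$: invisibility $I(R)=\sum_{i=1}^{m-1}|H^{s_i}_{UC}|\,(Time(r^{s_{i+1}})-Time(r^{s_i}))$ where $H^{s_i}_{UC}$ is the set of UCs in $H^{s_i}$; staleness $S(R)=\sum_{i=1}^{m-1}\sum_{v_k^{t_j}\in H^{s_i}_{qr}}\mathbf{1}[v_k^{t_j}\notin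 V^{t_i}]\,(Time(r^{s_{i+1}})-Time(r^{s_i}))$ where $H^{s_i}_{qr}$ is the set of view results in $H^{s_i}$ and $G^{t_i}$ is the latest version before $r^{s_i}$ starts. $S(A)$, $I(A)$ denote these metrics under lens $A$; lenses are compared on the same write transactions, the same order of computing new view results, and the same sequence of read transactions. *)

theory Defs
  imports Complex_Main
begin

text \<open>A state of a node: either a computed result v_k^{t_j} (Res j k) or a
placeholder UC_k^{t_j} (UC j k). Version 0 is the initial version
in which every node holds a result.\<close>

datatype 'n st = Res nat 'n | UC nat 'n

fun tstamp :: "'n st \<Rightarrow> nat" where
  "tstamp (Res j k) = j"
| "tstamp (UC j k) = j"

fun is_uc :: "'n st \<Rightarrow> bool" where
  "is_uc (Res j k) = False"
| "is_uc (UC j k) = True"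

fun is_res :: "'n st \<Rightarrow> bool" where
  "is_res (Res j k) = True"
| "is_res (UC j k) = False"

text \<open>Write transactions w^{t_1},...,w^{t_n} (indices 1..nw). Transaction i
starts (creates version G^{t_i}) at time wstart i, updates the node set upd i,
and the new result of node k \<in> upd i is computed at time ctime i k.
Read transactions r^{s_1},...,r^{s_m} are indexed 0..nr-1; read i happens
(and returns) at time rtime i and reads the viewport vport i.\<close>

record 'n writes =
  nw :: nat
  wstart :: "nat \<Rightarrow> real"
  upd :: "nat \<Rightarrow> 'n set"
  ctime :: "nat \<Rightarrow> 'n \<Rightarrow> real"

record 'n reads =
  nr :: nat
  rtime :: "nat \<Rightarrow> real"
  vport :: "nat \<Rightarrow> 'n set"

fun state :: "'n writes \<Rightarrow> nat \<Rightarrow> 'n \<Rightarrow> real \<Rightarrow> 'n st" where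
  "state W 0 k \<tau> = Res 0 k"
| "state W (Suc i) k \<tau> =
     (if k \<in> upd W (Suc i) then
        (if ctime W (Suc i) k \<le> \<tau> then Res (Suc i) k else UC (Suc i) k)
      else state W i k \<tau>)"

definition latest :: "'n writes \<Rightarrow> real \<Rightarrow> nat" where
  "latest W \<tau> = Max {i. i \<le> nw W \<and> (i = 0 \<or> wstart W i \<le> \<tau>)}"

definition committed :: "'n writes \<Rightarrow> nat \<Rightarrow> real \<Rightarrow> bool" where
  "committed W i \<tau> = (\<forall>k \<in> upd W i. ctime W i k \<le> \<tau>)"

definition committed_ver :: "'n writes \<Rightarrow> real \<Rightarrow> nat" where
  "committed_ver W \<tau> = Max {i. i \<le> latest W \<tau> \<and> (i = 0 \<or> committed W i \<tau>)}"

definition ucs :: "'n writes \<Rightarrow> nat \<Rightarrow> 'n set \<Rightarrow> real \<Rightarrow> nat" where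
  "ucs W i A \<tau> = card {x \<in> A. is_uc (state W i x \<tau>)}"

datatype lens = GCNB | LCNB | LCMB

definition gcnb_choice :: "'n set \<Rightarrow> 'n writes \<Rightarrow> 'n reads \<Rightarrow> nat \<Rightarrow> nat \<Rightarrow> nat" where
  "gcnb_choice N W R k i =
     (let \<tau> = rtime R i in
      if ucs W (latest W \<tau>) N \<tau> \<le> k then latest W \<tau> else committed_ver W \<tau>)"

definition lcnb_choice :: "'n writes \<Rightarrow> 'n reads \<Rightarrow> nat \<Rightarrow> nat \<Rightarrow> nat" where
  "lcnb_choice W R k i =
     (let \<tau> = rtime R i in
      if ucs W (latest W \<tau>) (vport R i) \<tau> \<le> k then latest W \<tau> else committed_ver W \<tau>)"

text \<open>k-LCMB step, given h x = largest timestamp of node x read so far (0 if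
never read; all timestamps are \<ge> 0, so this is harmless).  Reading version g
preserves monotonicity iff no viewport node gets a smaller timestamp than h.\<close>
definition lcmb_step :: "'n writes \<Rightarrow> 'n reads \<Rightarrow> nat \<Rightarrow> ('n \<Rightarrow> nat) \<Rightarrow> nat \<Rightarrow> nat" where
  "lcmb_step W R k h i =
     (let \<tau> = rtime R i;
          pres = (\<lambda>g. \<forall>x \<in> vport R i. h x \<le> tstamp (state W g x \<tau>))
      in if pres (committed_ver W \<tau>) \<and> pres (latest W \<tau>) then lcnb_choice W R k i
         else latest W \<tau>)"

fun lcmb_hist :: "'n writes \<Rightarrow> 'n reads \<Rightarrow> nat \<Rightarrow> nat \<Rightarrow> 'n \<Rightarrow> nat" where
  "lcmb_hist W R k 0 = (\<lambda>x. 0)"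
| "lcmb_hist W R k (Suc i) =
     (\<lambda>x. if x \<in> vport R i
          then max (lcmb_hist W R k i x)
                   (tstamp (state W (lcmb_step W R k (lcmb_hist W R k i) i) x (rtime R i)))
          else lcmb_hist W R k i x)"

definition lcmb_choice :: "'n writes \<Rightarrow> 'n reads \<Rightarrow> nat \<Rightarrow> nat \<Rightarrow> nat" where
  "lcmb_choice W R k i = lcmb_step W R k (lcmb_hist W R k i) i"

fun choice :: "lens \<Rightarrow> nat \<Rightarrow> 'n set \<Rightarrow> 'n writes \<Rightarrow> 'n reads \<Rightarrow> nat \<Rightarrow> nat" where
  "choice GCNB k N W R i = gcnb_choice N W R k i"
| "choice LCNB k N W R i = lcnb_choice W R k i"
| "choice LCMB k N W R i = lcmb_choice W R k i"

definition H :: "lens \<Rightarrow> nat \<Rightarrow> 'n set \<Rightarrow> 'n writes \<Rightarrow> 'n reads \<Rightarrow> nat \<Rightarrow> 'n st set" where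
  "H L k N W R i = (\<lambda>x. state W (choice L k N W R i) x (rtime R i)) ` vport R i"

definition Vlatest :: "'n set \<Rightarrow> 'n writes \<Rightarrow> 'n reads \<Rightarrow> nat \<Rightarrow> 'n st set" where
  "Vlatest N W R i = (\<lambda>x. state W (latest W (rtime R i)) x (rtime R i)) ` N"

definition invisibility :: "lens \<Rightarrow> nat \<Rightarrow> 'n set \<Rightarrow> 'n writes \<Rightarrow> 'n reads \<Rightarrow> real" where
  "invisibility L k N W R =
     (\<Sum>i < nr R - 1. real (card {s \<in> H L k N W R i. is_uc s}) * (rtime R (Suc i) - rtime R i))"

definition staleness :: "lens \<Rightarrow> nat \<Rightarrow> 'n set \<Rightarrow> 'n writes \<Rightarrow> 'n reads \<Rightarrow> real" where
  "staleness L k N W R =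
     (\<Sum>i < nr R - 1. real (card {s \<in> H L k N W R i. is_res s \<and> s \<notin> Vlatest N W R i})
                      * (rtime R (Suc i) - rtime R i))"

text \<open>Well-formed scenario: N is the finite node set of a DAG E; writes start in
order, each write updates nodes of N and computes a result only after it starts;
write transactions are processed one at a time (all new results of an earlier
write are computed no later than any new result of a later write); reads occur
in time order and read viewports of nodes of N.\<close>
definition valid_panorama :: "'n set \<Rightarrow> ('n \<times> 'n) set \<Rightarrow> 'n writes \<Rightarrow> 'n reads \<Rightarrow> bool" where
  "valid_panorama N E W R \<longleftrightarrow>
     finite N \<and> E \<subseteq> N \<times> N \<and> acyclic E \<and>
     (\<forall>i j. 1 \<le> i \<longrightarrow> i < j \<longrightarrow> j \<le> nw W \<longrightarrow> wstart W i < wstart W j) \<and>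
     (\<forall>i. 1 \<le> i \<longrightarrow> i \<le> nw W \<longrightarrow> upd W i \<subseteq> N) \<and>
     (\<forall>i k. 1 \<le> i \<longrightarrow> i \<le> nw W \<longrightarrow> k \<in> upd W i \<longrightarrow> wstart W i \<le> ctime W i k) \<and>
     (\<forall>i j k k'. 1 \<le> i \<longrightarrow> i < j \<longrightarrow> j \<le> nw W \<longrightarrow> k \<in> upd W i \<longrightarrow> k' \<in> upd W j
          \<longrightarrow> ctime W i k \<le> ctime W j k') \<and>
     (\<forall>i j. i < j \<longrightarrow> j < nr R \<longrightarrow> rtime R i < rtime R j) \<and>
     (\<forall>i < nr R. vport R i \<subseteq> N)"

end

theory Submission
  imports Defs
begin

text \<open>Every lens reads either the latest or the committed graph. On the viewport, the
latest graph has no stale results, and it has at least as many UCs as the committed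
graph: since writes are processed one at a time, a node that is still uncomputed in
some version stays uncomputed in every later version that updates it. Hence a lens
that reads the latest graph whenever another lens does has pointwise no more stale
results and no fewer UCs; and k-LCMB reads the latest graph whenever k-LCNB does,
which in turn does so whenever k-GCNB does.\<close>

definition serial_writes :: "'n writes \<Rightarrow> bool" where
  "serial_writes W \<longleftrightarrow>
     (\<forall>i j x. 1 \<le> i \<longrightarrow> i < j \<longrightarrow> j \<le> nw W \<longrightarrow> x \<in> upd W i \<longrightarrow> x \<in> upd W j
        \<longrightarrow> ctime W i x \<le> ctime W j x)"

lemma valid_panorama_serial_writes: "valid_panorama N E W R \<Longrightarrow> serial_writes W"
  unfolding valid_panorama_def serial_writes_def by blast

fun st_node :: "'n st \<Rightarrow> 'n" where
  "st_node (Res j x) = x"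
| "st_node (UC j x) = x"

lemma st_node_state [simp]: "st_node (state W g x \<tau>) = x"
  by (induction g) auto

lemma inj_on_state: "inj_on (\<lambda>x. state W g x \<tau>) A"
  by (rule inj_on_inverseI[where g = st_node]) simp

lemma is_uc_state_pending:
  "is_uc (state W g x \<tau>) \<Longrightarrow> \<exists>j. 1 \<le> j \<and> j \<le> g \<and> x \<in> upd W j \<and> \<tau> < ctime W j x"
proof (induction g)
  case 0
  then show ?case by simp
next
  case (Suc g)
  show ?case
  proof (cases "x \<in> upd W (Suc g)")
    case True
    with Suc.prems have "\<tau> < ctime W (Suc g) x" by (auto split: if_splits)
    with True show ?thesis by (intro exI[of _ "Suc g"]) auto
  next
    case False
    with Suc show ?thesis by fastforce
  qed
qed

lemma is_uc_state_mono:
  assumes "serial_writes W" and "is_uc (state W g x \<tau>)" and "g \<le> g'" and "g' \<le> nw W"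
  shows "is_uc (state W g' x \<tau>)"
  using \<open>g \<le> g'\<close>
proof (induction g' rule: dec_induct)
  case base
  show ?case by fact
next
  case (step i)
  show ?case
  proof (cases "x \<in> upd W (Suc i)")
    case True
    obtain j where j: "1 \<le> j" "j \<le> i" "x \<in> upd W j" "\<tau> < ctime W j x"
      using is_uc_state_pending[OF step.IH] by blast
    have "ctime W j x \<le> ctime W (Suc i) x"
      using \<open>serial_writes W\<close> j True step.hyps(2) \<open>g' \<le> nw W\<close>
      unfolding serial_writes_def by auto
    with j True show ?thesis by simp
  next
    case False
    with step.IH show ?thesis by simp
  qed
qed

lemma ucs_mono_version:
  assumes "serial_writes W" and "finite A" and "g \<le> g'" and "g' \<le> nw W"
  shows "ucs W g A \<tau> \<le> ucs W g' A \<tau>"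
  unfolding ucs_def using assms by (intro card_mono) (auto intro: is_uc_state_mono)

lemma latest_le_nw: "latest W \<tau> \<le> nw W"
  unfolding latest_def by (intro Max.boundedI) auto

lemma committed_ver_le_latest: "committed_ver W \<tau> \<le> latest W \<tau>"
  unfolding committed_ver_def by (intro Max.boundedI) auto

lemma choice_latest_or_committed:
  "choice L k N W R i = latest W (rtime R i) \<or> choice L k N W R i = committed_ver W (rtime R i)"
  by (cases L) (auto simp: gcnb_choice_def lcnb_choice_def lcmb_choice_def lcmb_step_def Let_def)

lemma ucs_choice_le_latest:
  assumes "serial_writes W" and "finite A"
  shows "ucs W (choice L k N W R i) A (rtime R i)
       \<le> ucs W (latest W (rtime R i)) A (rtime R i)"
  using choice_latest_or_committed[of L k N W R i]
proof
  assume "choice L k N W R i = committed_ver W (rtime R i)"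
  then show ?thesis
    using ucs_mono_version[OF assms committed_ver_le_latest latest_le_nw] by simp
qed simp

lemma card_Collect_H:
  "card {s \<in> H L k N W R i. P s}
     = card {x \<in> vport R i. P (state W (choice L k N W R i) x (rtime R i))}"
proof -
  have "{s \<in> H L k N W R i. P s}
      = (\<lambda>x. state W (choice L k N W R i) x (rtime R i))
          ` {x \<in> vport R i. P (state W (choice L k N W R i) x (rtime R i))}"
    unfolding H_def by auto
  then show ?thesis by (simp add: card_image inj_on_state)
qed

lemma no_stale_in_latest:
  assumes "vport R i \<subseteq> N"
  shows "{x \<in> vport R i. is_res (state W (latest W (rtime R i)) x (rtime R i))
            \<and> state W (latest W (rtime R i)) x (rtime R i) \<notin> Vlatest N W R i} = {}"
  using assms unfolding Vlatest_def by auto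

lemma read_counts_compare:
  assumes "valid_panorama N E W R" and "i < nr R"
    and reads_latest: "choice B k N W R i = latest W (rtime R i)
                         \<Longrightarrow> choice A k N W R i = latest W (rtime R i)"
  shows "card {s \<in> H B k N W R i. is_uc s} \<le> card {s \<in> H A k N W R i. is_uc s}"
    and "card {s \<in> H A k N W R i. is_res s \<and> s \<notin> Vlatest N W R i}
       \<le> card {s \<in> H B k N W R i. is_res s \<and> s \<notin> Vlatest N W R i}"
proof -
  have "vport R i \<subseteq> N" and "finite N"
    using assms(1,2) unfolding valid_panorama_def by auto
  then have "finite (vport R i)" by (rule finite_subset)
  have serial: "serial_writes W" using assms(1) by (rule valid_panorama_serial_writes)
  consider (latest) "choice A k N W R i = latest W (rtime R i)"
    | (same) "choice A k N W R i = choice B k N W R i"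
    using choice_latest_or_committed[of A k N W R i] choice_latest_or_committed[of B k N W R i]
      reads_latest by metis
  note choices = this
  from choices show "card {s \<in> H B k N W R i. is_uc s} \<le> card {s \<in> H A k N W R i. is_uc s}"
  proof cases
    case latest
    then show ?thesis
      using ucs_choice_le_latest[OF serial \<open>finite (vport R i)\<close>, of B k N R i]
      by (simp add: card_Collect_H ucs_def)
  qed (simp add: card_Collect_H)
  from choices show "card {s \<in> H A k N W R i. is_res s \<and> s \<notin> Vlatest N W R i}
       \<le> card {s \<in> H B k N W R i. is_res s \<and> s \<notin> Vlatest N W R i}"
  proof cases
    case latest
    show ?thesis
      unfolding card_Collect_H latest no_stale_in_latest[OF \<open>vport R i \<subseteq> N\<close>] by simp
  qed (simp add: card_Collect_H)
qed

lemma metrics_compare: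
  assumes "valid_panorama N E W R"
    and reads_latest: "\<And>i. i < nr R \<Longrightarrow> choice B k N W R i = latest W (rtime R i)
                         \<Longrightarrow> choice A k N W R i = latest W (rtime R i)"
  shows "staleness A k N W R \<le> staleness B k N W R"
    and "invisibility B k N W R \<le> invisibility A k N W R"
proof -
  have gap: "0 \<le> rtime R (Suc i) - rtime R i" if "i < nr R - 1" for i
    using assms(1) that unfolding valid_panorama_def by (auto intro: less_imp_le)
  note counts = read_counts_compare[OF assms(1) _ reads_latest]
  show "staleness A k N W R \<le> staleness B k N W R"
    unfolding staleness_def using counts(2) gap by (intro sum_mono mult_right_mono) auto
  show "invisibility B k N W R \<le> invisibility A k N W R"
    unfolding invisibility_def using counts(1) gap by (intro sum_mono mult_right_mono) auto
qed

lemma lcmb_reads_latest_if_lcnb_does: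
  "choice LCNB k N W R i = latest W (rtime R i)
   \<Longrightarrow> choice LCMB k N W R i = latest W (rtime R i)"
  by (simp add: lcmb_choice_def lcmb_step_def Let_def)

lemma lcnb_reads_latest_if_gcnb_does:
  assumes "finite N" and "vport R i \<subseteq> N"
    and gcnb: "choice GCNB k N W R i = latest W (rtime R i)"
  shows "choice LCNB k N W R i = latest W (rtime R i)"
proof (cases "ucs W (latest W (rtime R i)) N (rtime R i) \<le> k")
  case True
  moreover have "ucs W (latest W (rtime R i)) (vport R i) (rtime R i)
               \<le> ucs W (latest W (rtime R i)) N (rtime R i)"
    unfolding ucs_def using assms(1,2) by (intro card_mono) auto
  ultimately show ?thesis by (simp add: lcnb_choice_def Let_def)
next
  case False
  with gcnb have "committed_ver W (rtime R i) = latest W (rtime R i)"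
    by (simp add: gcnb_choice_def Let_def)
  then show ?thesis by (simp add: lcnb_choice_def Let_def)
qed

theorem theorem2p12:
  fixes N :: "'n set" and E :: "('n \<times> 'n) set" and W :: "'n writes" and R :: "'n reads"
    and k :: nat
  assumes "valid_panorama N E W R"
  shows "staleness LCMB k N W R \<le> staleness LCNB k N W R
       \<and> staleness LCNB k N W R \<le> staleness GCNB k N W R
       \<and> invisibility LCMB k N W R \<ge> invisibility LCNB k N W R
       \<and> invisibility LCNB k N W R \<ge> invisibility GCNB k N W R"
proof -
  have "finite N" and "vport R i \<subseteq> N" if "i < nr R" for i
    using assms that unfolding valid_panorama_def by auto
  then have "choice GCNB k N W R i = latest W (rtime R i)
             \<Longrightarrow> choice LCNB k N W R i = latest W (rtime R i)"
    if "i < nr R" for i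
    using that lcnb_reads_latest_if_gcnb_does by blast
  then show ?thesis
    using metrics_compare[OF assms, of LCNB k LCMB] metrics_compare[OF assms, of GCNB k LCNB]
      lcmb_reads_latest_if_lcnb_does by blast
qed

end
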